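(* Let $m\ge3$ be odd, let $s$ be an even positive integer not divisible by $4$, $n=sm$, and $\Gamma=C_n[mK_1]$. Define $$\sigma_1=(1,1,\dots,1,tc^{-1})r,\qquad \sigma_2=(t,\beta_2,\beta_3,\dots,\beta_n)z,\qquad G=\langle\sigma_1,\sigma_2\rangle,$$ where for $2\le i\le n$, $\beta_i=c$ if $i\equiv0$ or $3\pmod 4$ and $\beta_i=c^{-1}$ if $i\equiv1$ or $2\pmod4$ (so $\sigma_2=(t,c^{-1},c,c,c^{-1},c^{-1},\dots,c,c,c^{-1},c^{-1})z$). Then $\sigma_1$ has order $2n$, $\sigma_2$ has order $2m$, $\sigma_1\sigma_2$ has order $2$, and $|G|=4m^2n$.
   Context: $C_n[mK_1]$ is the graph with vertex set $\{1,\dots,n\}\times\{1,\dots,m\}$ in which $(i_1,j_1)$ is adjacent to $(i_2,j_2)$ if and only if $i_1\equiv i_2\pm1\pmod n$ (residues mod $n$ taken in $\{1,\dots,n\}$). Permutations act on the right ($x\alpha$ is the image of $x$) and products are composed left to right, both in $S_m$ and in $\mathrm{Aut}(\Gamma)$. For $\alpha_1,\dots,\alpha_n\in S_m$ and a permutation $x$ of $\{1,\dots,n\}$ in the dihedral group $D_n=\langle r,z\rangle$, $(\alpha_1,\dots,\alpha_n)x$ denotes the automorphism of $\Gamma$ mapping $(i,j)\mapsto(ix,\,j\alpha_i)$; $1$ denotes an identity permutation. Here $c=(1\,2\,\cdots\,m)\in S_m$; $t\in S_m$ fixes $1$ and maps $j\mapsto m-j+2$ for $2\le j\le m$; $r$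 is the permutation $i\mapsto i+1 \pmod n$ of $\{1,\dots,n\}$; and $z$ fixes $1$ and maps $j\mapsto n-j+2$ for $2\le j\le n$. *)

theory Defs
  imports "HOL-Algebra.Bij" "HOL-Algebra.Generated_Groups" "HOL-Algebra.Multiplicative_Group"
begin

text \<open>Vertex set of C_n[mK_1]: {1..n} x {1..m}.  Permutations of {1..m} and of {1..n}
  are represented as functions nat => nat (only their values on the relevant range matter).\<close>

definition vset :: "nat \<Rightarrow> nat \<Rightarrow> (nat \<times> nat) set" where
  "vset n m = {1..n} \<times> {1..m}"

text \<open>Product of permutations composed left to right (right action): x (a b) = (x a) b.\<close>
definition pmul :: "(nat \<Rightarrow> nat) \<Rightarrow> (nat \<Rightarrow> nat) \<Rightarrow> (nat \<Rightarrow> nat)" where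
  "pmul a b = b \<circ> a"

definition cperm :: "nat \<Rightarrow> nat \<Rightarrow> nat" where
  "cperm m j = j mod m + 1"

definition cinv :: "nat \<Rightarrow> nat \<Rightarrow> nat" where
  "cinv m j = (j + m - 2) mod m + 1"

definition tperm :: "nat \<Rightarrow> nat \<Rightarrow> nat" where
  "tperm m j = (if j = 1 then 1 else m + 2 - j)"

definition rperm :: "nat \<Rightarrow> nat \<Rightarrow> nat" where
  "rperm n i = i mod n + 1"

definition zperm :: "nat \<Rightarrow> nat \<Rightarrow> nat" where
  "zperm n i = (if i = 1 then 1 else n + 2 - i)"

text \<open>The automorphism (alpha_1,...,alpha_n) x : (i,j) -> (i x, j alpha_i),
  as an element of the symmetric group on the vertex set (extensional).\<close>
definition aut :: "nat \<Rightarrow> nat \<Rightarrow> (nat \<Rightarrow> nat \<Rightarrow> nat) \<Rightarrow> (nat \<Rightarrow> nat)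
                    \<Rightarrow> (nat \<times> nat \<Rightarrow> nat \<times> nat)" where
  "aut n m \<alpha> x = (\<lambda>v \<in> vset n m. (x (fst v), \<alpha> (fst v) (snd v)))"

definition sigma1 :: "nat \<Rightarrow> nat \<Rightarrow> (nat \<times> nat \<Rightarrow> nat \<times> nat)" where
  "sigma1 n m = aut n m (\<lambda>i. if i = n then pmul (tperm m) (cinv m) else id) (rperm n)"

definition beta :: "nat \<Rightarrow> nat \<Rightarrow> nat \<Rightarrow> nat" where
  "beta m i = (if i mod 4 = 0 \<or> i mod 4 = 3 then cperm m else cinv m)"

definition sigma2 :: "nat \<Rightarrow> nat \<Rightarrow> (nat \<times> nat \<Rightarrow> nat \<times> nat)" where
  "sigma2 n m = aut n m (\<lambda>i. if i = 1 then tperm m else beta m i) (zperm n)"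

end

theory Submission
  imports Defs
begin

(* The vertices {1..n} x {1..m} are covered twice by the box Z_2n x Z_m, the deck involution
   being (I, J) |-> (I + n, -J - 1); the twist t c^-1 of sigma1 is the monodromy of this cover.
   Both generators lift to affine maps (I, J) |-> (e I + A, h J + w I) with e, h = +-1 and
   w (I + 2) = h - 1 - w I.  As n = 2 (mod 4), these admissible maps commute with the deck
   involution, hence descend to permutations, and they form a group.  Two of them descend to
   the same permutation iff, reduced mod (2n, m), they agree up to the deck involution; this
   yields the normal forms (e, A mod n, h, w 0 mod m, w 1 mod m), 2 * n * 2 * m * m in number.  Conversely every
   admissible map lies in <sigma1, sigma2>: the powers of sigma1 are the translations, sigma1^n
   acts as the reflection J |-> -J - 1, the powers of sigma2^2 (m odd) and their conjugates
   under sigma1 give all shears J |-> J + w I, and sigma2 supplies e = -1.  The orders are read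
   off from the normal forms. *)

definition alternating :: "int \<Rightarrow> (int \<Rightarrow> int) \<Rightarrow> bool" where
  "alternating h w \<longleftrightarrow> (\<forall>I. w (I + 2) = h - 1 - w I)"

definition alt_fun :: "int \<Rightarrow> int \<Rightarrow> int \<Rightarrow> int \<Rightarrow> int" where
  "alt_fun h a b I = (if I mod 4 = 0 then a else if I mod 4 = 1 then b
     else if I mod 4 = 2 then h - 1 - a else h - 1 - b)"

lemma alt_fun_0_1 [simp]: "alt_fun h a b 0 = a" "alt_fun h a b 1 = b"
  by (simp_all add: alt_fun_def)

lemma alternating_alt_fun: "alternating h (alt_fun h a b)"
  unfolding alternating_def alt_fun_def by (auto, presburger+)

lemma alternating_add_4_mult:
  assumes "alternating h w"
  shows "w (I + 4 * k) = w I"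
proof -
  have step: "w (I + 4) = w I" for I
    using assms[unfolded alternating_def, rule_format, of I]
          assms[unfolded alternating_def, rule_format, of "I + 2"]
    by (simp add: add.assoc)
  have up: "w (I + 4 * int j) = w I" for j I
  proof (induction j)
    case (Suc j)
    then show ?case using step[of "I + 4 * int j"] by (simp add: algebra_simps)
  qed simp
  show ?thesis
  proof (cases "k \<ge> 0")
    case True
    then show ?thesis using up[of I "nat k"] by simp
  next
    case False
    then show ?thesis using up[of "I + 4 * k" "nat (- k)"] by simp
  qed
qed

lemma alternating_eq_alt_fun:
  assumes "alternating h w"
  shows "w = alt_fun h (w 0) (w 1)"
proof
  fix I
  have "w I = w (I mod 4)"
    using alternating_add_4_mult[OF assms, of "I mod 4" "I div 4"] by simp
  moreover have "w 2 = h - 1 - w 0" "w 3 = h - 1 - w 1"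
    using assms[unfolded alternating_def, rule_format, of 0]
          assms[unfolded alternating_def, rule_format, of 1] by simp_all
  moreover have "I mod 4 = 0 \<or> I mod 4 = 1 \<or> I mod 4 = 2 \<or> I mod 4 = 3" by presburger
  ultimately show "w I = alt_fun h (w 0) (w 1) I" unfolding alt_fun_def by auto
qed

lemma alternating_add_2_sign:
  assumes "alternating h w" and "e = 1 \<or> e = -1"
  shows "w (x + 2 * e) = h - 1 - w x"
  using assms(2)
proof
  assume "e = -1"
  then show ?thesis using assms(1)[unfolded alternating_def, rule_format, of "x - 2"] by simp
qed (use assms(1) in \<open>simp add: alternating_def\<close>)

lemma alt_fun_cong:
  assumes "a mod M = a' mod M" and "b mod M = b' mod M"
  shows "alt_fun h a b I mod M = alt_fun h a' b' I mod M"
  using assms mod_diff_right_eq[of "h - 1" a M] mod_diff_right_eq[of "h - 1" a' M]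
        mod_diff_right_eq[of "h - 1" b M] mod_diff_right_eq[of "h - 1" b' M]
  unfolding alt_fun_def by simp

lemma alt_fun_add: "alt_fun 1 a b I + alt_fun 1 a' b' I = alt_fun 1 (a + a') (b + b') I"
  by (simp add: alt_fun_def)

lemma alt_fun_shift: "alt_fun h a b (I + 1) = alt_fun h b (h - 1 - a) I"
  unfolding alt_fun_def by presburger

lemma reflect_mod_reflect: "(- ((- J - 1) mod M) - 1) mod M = (J :: int) mod M"
proof -
  have "(- ((- J - 1) mod M) - 1) mod M = (- (- J - 1) - 1) mod M"
    by (metis mod_diff_left_eq mod_minus_eq)
  then show ?thesis by simp
qed

lemma cperm_eq: "cperm m j = nat (int j mod int m + 1)"
  by (simp add: cperm_def of_nat_mod[symmetric] nat_int_add)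

lemma cinv_eq:
  assumes "1 \<le> j" and "0 < m"
  shows "cinv m j = nat ((int j - 2) mod int m + 1)"
proof -
  have "int ((j + m - 2) mod m) = (int j - 2 + int m) mod int m"
    using assms by (simp add: of_nat_mod of_nat_diff algebra_simps)
  then have "int ((j + m - 2) mod m) = (int j - 2) mod int m" by simp
  then show ?thesis unfolding cinv_def by linarith
qed

lemma tperm_eq:
  assumes "1 \<le> j" and "j \<le> m"
  shows "tperm m j = nat ((1 - int j) mod int m + 1)"
proof (cases "j = 1")
  case False
  have "(1 - int j) mod int m = (1 - int j + int m) mod int m" by simp
  also have "\<dots> = 1 - int j + int m" using assms False by (intro mod_pos_pos_trivial) auto
  finally show ?thesis using assms False by (simp add: tperm_def)
qed (simp add: tperm_def)

lemma cinv_tperm: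
  assumes "1 \<le> j" and "j \<le> m"
  shows "cinv m (tperm m j) = nat ((- int j) mod int m + 1)"
proof -
  have m: "0 < m" using assms by simp
  have t: "int (tperm m j) = (1 - int j) mod int m + 1"
    using tperm_eq[OF assms] m by (simp add: add_nonneg_nonneg)
  moreover have "0 \<le> (1 - int j) mod int m" using m by simp
  ultimately have "1 \<le> tperm m j" by linarith
  then have "cinv m (tperm m j) = nat (((1 - int j) mod int m - 1) mod int m + 1)"
    using cinv_eq[OF _ m, of "tperm m j"] t by simp
  moreover have "((1 - int j) mod int m - 1) mod int m = (- int j) mod int m"
    using mod_diff_left_eq[of "1 - int j" "int m" 1] by simp
  ultimately show ?thesis by simp
qed

lemma beta_eq:
  assumes "1 \<le> i" and "1 \<le> j" and "0 < m"
  shows "beta m i j = nat ((int j - 2 - alt_fun (-1) 0 0 (int i - 1)) mod int m + 1)"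
proof -
  have alt: "alt_fun (-1) 0 0 (int i - 1) = (if i mod 4 = 1 \<or> i mod 4 = 2 then 0 else -2)"
    using assms(1) unfolding alt_fun_def by presburger
  show ?thesis
  proof (cases "i mod 4 = 1 \<or> i mod 4 = 2")
    case True
    then show ?thesis using alt cinv_eq[OF assms(2,3)] by (auto simp: beta_def)
  next
    case False
    then have "i mod 4 = 0 \<or> i mod 4 = 3" by presburger
    then show ?thesis using alt False by (auto simp: beta_def cperm_eq)
  qed
qed

lemma sign_eq_of_cong:
  fixes e e' k :: int
  assumes "e = 1 \<or> e = -1" "e' = 1 \<or> e' = -1" and "e mod k = e' mod k" and "2 < k"
  shows "e = e'"
proof (rule ccontr)
  assume "e \<noteq> e'"
  then have "k dvd 2" using assms(1-3) mod_eq_dvd_iff[of e k e'] by auto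
  then show False using assms(4) zdvd_imp_le[of k 2] by simp
qed

text \<open>A tuple \<open>(e, A, h, w)\<close> encodes the map \<open>(I, J) \<mapsto> (e I + A, h J + w I)\<close> of \<open>\<int> \<times> \<int>\<close>.\<close>

type_synonym aff = "int \<times> int \<times> int \<times> (int \<Rightarrow> int)"

fun aff_comp :: "aff \<Rightarrow> aff \<Rightarrow> aff" where
  "aff_comp (e2, A2, h2, w2) (e1, A1, h1, w1) =
     (e2 * e1, e2 * A1 + A2, h2 * h1, \<lambda>I. h2 * w1 I + w2 (e1 * I + A1))"

fun aff_inv :: "aff \<Rightarrow> aff" where
  "aff_inv (e, A, h, w) = (e, - e * A, h, \<lambda>K. - h * w (e * (K - A)))"

definition aff_id :: aff where
  "aff_id = (1, 0, 1, \<lambda>_. 0)"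

fun aff_pow :: "aff \<Rightarrow> nat \<Rightarrow> aff" where
  "aff_pow P 0 = aff_id"
| "aff_pow P (Suc k) = aff_comp (aff_pow P k) P"

fun admissible :: "aff \<Rightarrow> bool" where
  "admissible (e, A, h, w) \<longleftrightarrow> (e = 1 \<or> e = -1) \<and> (h = 1 \<or> h = -1) \<and> alternating h w"

definition translation :: "int \<Rightarrow> aff" where
  "translation A = (1, A, 1, \<lambda>_. 0)"

definition shear :: "int \<Rightarrow> int \<Rightarrow> aff" where
  "shear a b = (1, 0, 1, alt_fun 1 a b)"

lemma aff_comp_assoc: "aff_comp (aff_comp P Q) R = aff_comp P (aff_comp Q R)"
  by (cases P rule: prod_cases4, cases Q rule: prod_cases4, cases R rule: prod_cases4)
     (simp add: algebra_simps)

lemma aff_comp_id_left [simp]: "aff_comp aff_id P = P"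
  and aff_comp_id_right [simp]: "aff_comp P aff_id = P"
  by (cases P rule: prod_cases4, simp add: aff_id_def)+

lemma admissible_aff_id: "admissible aff_id"
  by (simp add: aff_id_def alternating_def)

lemma admissible_aff_comp:
  assumes "admissible P" and "admissible Q"
  shows "admissible (aff_comp P Q)"
proof -
  obtain e2 A2 h2 w2 where P: "P = (e2, A2, h2, w2)" by (cases P rule: prod_cases4)
  obtain e1 A1 h1 w1 where Q: "Q = (e1, A1, h1, w1)" by (cases Q rule: prod_cases4)
  have e1: "e1 = 1 \<or> e1 = -1" and w1: "alternating h1 w1" and w2: "alternating h2 w2"
    using assms by (simp_all add: P Q)
  have "h2 * w1 (I + 2) + w2 (e1 * (I + 2) + A1) = h2 * h1 - 1 - (h2 * w1 I + w2 (e1 * I + A1))" for I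
  proof -
    have step2: "w2 (e1 * (I + 2) + A1) = h2 - 1 - w2 (e1 * I + A1)"
      using alternating_add_2_sign[OF w2 e1, of "e1 * I + A1"] by (simp add: algebra_simps)
    have step1: "w1 (I + 2) = h1 - 1 - w1 I" using w1 by (simp add: alternating_def)
    show ?thesis unfolding step1 step2 by (simp add: algebra_simps)
  qed
  then have "alternating (h2 * h1) (\<lambda>I. h2 * w1 I + w2 (e1 * I + A1))"
    by (simp add: alternating_def)
  then show ?thesis using assms by (auto simp: P Q)
qed

lemma admissible_aff_inv:
  assumes "admissible P"
  shows "admissible (aff_inv P)"
proof -
  obtain e A h w where P: "P = (e, A, h, w)" by (cases P rule: prod_cases4)
  have e: "e = 1 \<or> e = -1" and h: "h = 1 \<or> h = -1" and w: "alternating h w"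
    using assms by (simp_all add: P)
  have "w (e * (K + 2 - A)) = h - 1 - w (e * (K - A))" for K
    using alternating_add_2_sign[OF w e, of "e * (K - A)"] by (simp add: algebra_simps)
  then have "alternating h (\<lambda>K. - h * w (e * (K - A)))"
    using h by (auto simp: alternating_def)
  then show ?thesis using e h by (simp add: P)
qed

lemma aff_comp_inv_left:
  assumes "admissible P"
  shows "aff_comp (aff_inv P) P = aff_id"
proof -
  obtain e A h w where P: "P = (e, A, h, w)" by (cases P rule: prod_cases4)
  have "e * e = 1" "h * h = 1" using assms by (auto simp: P)
  then show ?thesis by (simp add: P aff_id_def algebra_simps)
qed

lemma aff_comp_inv_right:
  assumes "admissible P"
  shows "aff_comp P (aff_inv P) = aff_id"
proof -
  obtain e A h w where P: "P = (e, A, h, w)" by (cases P rule: prod_cases4)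
  have "e * e = 1" "h * h = 1" using assms by (auto simp: P)
  moreover have "e * I - e * A = e * (I - A)" for I by (simp add: algebra_simps)
  ultimately show ?thesis by (simp add: P aff_id_def mult.assoc[symmetric])
qed

lemma admissible_aff_pow: "admissible P \<Longrightarrow> admissible (aff_pow P k)"
  by (induction k) (simp_all add: admissible_aff_id admissible_aff_comp)

lemma admissible_translation: "admissible (translation A)"
  by (simp add: translation_def alternating_def)

lemma admissible_shear: "admissible (shear a b)"
  by (simp add: shear_def alternating_alt_fun)

lemma aff_pow_translation: "aff_pow (translation a) k = translation (int k * a)"
  by (induction k) (simp_all add: aff_id_def translation_def algebra_simps)

lemma aff_comp_shear: "aff_comp (shear a b) (shear a' b') = shear (a + a') (b + b')"
  by (simp add: shear_def alt_fun_add add.commute)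

lemma aff_pow_involution:
  assumes "aff_comp X X = aff_id"
  shows "aff_pow X k = (if even k then aff_id else X)"
  by (induction k) (simp_all add: assms)

lemma conj_translation:
  "aff_comp (aff_comp (translation (-1)) (1, 0, h, w)) (translation 1) = (1, 0, h, \<lambda>I. w (I + 1))"
  by (simp add: translation_def add.commute)

definition sigma2_lift :: aff where
  "sigma2_lift = (-1, 0, -1, alt_fun (-1) 0 0)"

lemma admissible_sigma2_lift: "admissible sigma2_lift"
  by (simp add: sigma2_lift_def alternating_alt_fun)

lemma sigma2_lift_square: "aff_comp sigma2_lift sigma2_lift = shear 0 (-2)"
proof -
  have "- alt_fun (-1) 0 0 I + alt_fun (-1) 0 0 (- I) = alt_fun 1 0 (-2) I" for I
    unfolding alt_fun_def by presburger
  then show ?thesis by (simp add: sigma2_lift_def shear_def)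
qed

lemma aff_pow_sigma2_lift_even: "aff_pow sigma2_lift (2 * q) = shear 0 (- 2 * int q)"
proof (induction q)
  case 0
  have "alt_fun 1 0 0 = (\<lambda>_. 0)" by (auto simp: alt_fun_def)
  then show ?case by (simp add: aff_id_def shear_def)
next
  case (Suc q)
  have "2 * Suc q = Suc (Suc (2 * q))" by simp
  then have "aff_pow sigma2_lift (2 * Suc q)
      = aff_comp (aff_pow sigma2_lift (2 * q)) (aff_comp sigma2_lift sigma2_lift)"
    by (simp only: aff_pow.simps aff_comp_assoc)
  also have "\<dots> = shear 0 (- 2 * int (Suc q))"
    unfolding Suc.IH sigma2_lift_square aff_comp_shear by (simp add: algebra_simps)
  finally show ?case .
qed

lemma sigma2_sigma1_lift_involution:
  "aff_comp (aff_comp sigma2_lift (translation 1)) (aff_comp sigma2_lift (translation 1)) = aff_id"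
proof -
  have "- alt_fun (-1) 0 0 (I + 1) + alt_fun (-1) 0 0 (- I) = 0" for I
    unfolding alt_fun_def by presburger
  then show ?thesis by (simp add: sigma2_lift_def translation_def aff_id_def add.commute)
qed

locale double_cover =
  fixes n m :: nat
  assumes n_mod_4: "n mod 4 = 2" and m_pos: "0 < m"
begin

text \<open>The box stands for \<open>\<int>\<^sub>2\<^sub>n \<times> \<int>\<^sub>m\<close>, and \<open>cover_proj\<close> identifies \<open>(I, J)\<close> with
  \<open>aff_apply deck (I, J) = (I + n, - J - 1)\<close>; vertices are lifted into the lower half \<open>I < n\<close>.\<close>

definition cover_box :: "(int \<times> int) set" where
  "cover_box = {0..<2 * int n} \<times> {0..<int m}"

fun cover_proj :: "int \<times> int \<Rightarrow> nat \<times> nat" where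
  "cover_proj (I, J) = (if I < int n then (nat (I + 1), nat (J + 1))
     else (nat (I - int n + 1), nat ((- J - 1) mod int m + 1)))"

definition vertex_lift :: "nat \<times> nat \<Rightarrow> int \<times> int" where
  "vertex_lift v = (int (fst v) - 1, int (snd v) - 1)"

fun aff_apply :: "aff \<Rightarrow> int \<times> int \<Rightarrow> int \<times> int" where
  "aff_apply (e, A, h, w) (I, J) = ((e * I + A) mod (2 * int n), (h * J + w I) mod int m)"

definition aff_perm :: "aff \<Rightarrow> nat \<times> nat \<Rightarrow> nat \<times> nat" where
  "aff_perm P = (\<lambda>v \<in> vset n m. cover_proj (aff_apply P (vertex_lift v)))"

definition deck :: aff where
  "deck = (1, int n, -1, \<lambda>_. -1)"

lemma int_n_eq: "int n = 4 * int (n div 4) + 2"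
  using n_mod_4 by presburger

lemma n_pos: "0 < n"
  by (rule gr0I) (use n_mod_4 in simp)

lemma alternating_mod_2n:
  assumes "alternating h w"
  shows "w (x mod (2 * int n)) = w x"
proof -
  have "x = x mod (2 * int n) + 4 * ((2 * int (n div 4) + 1) * (x div (2 * int n)))"
    using mod_mult_div_eq[of x "2 * int n"] int_n_eq by (simp add: algebra_simps)
  then show ?thesis by (metis alternating_add_4_mult[OF assms])
qed

lemma alternating_add_n:
  assumes "alternating h w"
  shows "w (x + int n) = h - 1 - w x"
proof -
  have "w (x + int n) = w (x + 2 + 4 * int (n div 4))"
    using int_n_eq by (simp add: algebra_simps)
  also have "\<dots> = w (x + 2)" by (rule alternating_add_4_mult[OF assms])
  finally show ?thesis using assms by (simp add: alternating_def)
qed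

lemma aff_apply_in_box: "aff_apply P x \<in> cover_box"
  using m_pos n_mod_4 by (cases P rule: prod_cases4, cases x) (auto simp: cover_box_def)

lemma aff_apply_cong:
  assumes "A mod (2 * int n) = A' mod (2 * int n)" and "\<And>I. w I mod int m = w' I mod int m"
  shows "aff_apply (e, A, h, w) = aff_apply (e, A', h, w')"
proof
  fix x :: "int \<times> int"
  show "aff_apply (e, A, h, w) x = aff_apply (e, A', h, w') x"
    using assms mod_add_right_eq[of "e * fst x" A "2 * int n"]
      mod_add_right_eq[of "e * fst x" A' "2 * int n"] mod_add_right_eq[of "h * snd x" "w (fst x)" "int m"]
      mod_add_right_eq[of "h * snd x" "w' (fst x)" "int m"]
    by (cases x) simp
qed

lemma aff_apply_comp:
  assumes "admissible P"
  shows "aff_apply P (aff_apply Q x) = aff_apply (aff_comp P Q) x"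
proof -
  obtain e2 A2 h2 w2 where P: "P = (e2, A2, h2, w2)" by (cases P rule: prod_cases4)
  obtain e1 A1 h1 w1 where Q: "Q = (e1, A1, h1, w1)" by (cases Q rule: prod_cases4)
  obtain I J where x: "x = (I, J)" by (cases x)
  have w2: "alternating h2 w2" using assms by (simp add: P)
  have "(e2 * ((e1 * I + A1) mod (2 * int n)) + A2) mod (2 * int n)
      = (e2 * (e1 * I + A1) + A2) mod (2 * int n)"
    by (metis mod_add_left_eq mod_mult_right_eq)
  moreover have "(h2 * ((h1 * J + w1 I) mod int m) + w2 ((e1 * I + A1) mod (2 * int n))) mod int m
      = (h2 * (h1 * J + w1 I) + w2 (e1 * I + A1)) mod int m"
    unfolding alternating_mod_2n[OF w2] by (metis mod_add_left_eq mod_mult_right_eq)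
  ultimately show ?thesis by (simp add: P Q x algebra_simps)
qed

lemma admissible_deck: "admissible deck"
  by (simp add: deck_def alternating_def)

lemma aff_apply_deck_commute:
  assumes "admissible P"
  shows "aff_apply P (aff_apply deck x) = aff_apply deck (aff_apply P x)"
proof -
  obtain e A h w where P: "P = (e, A, h, w)" by (cases P rule: prod_cases4)
  have e: "e = 1 \<or> e = -1" and w: "alternating h w" using assms by (simp_all add: P)
  have "(e * int n + A) mod (2 * int n) = (A + int n) mod (2 * int n)"
    using e
  proof
    assume "e = -1"
    then have "e * int n + A = (A + int n) + (-1) * (2 * int n)" by simp
    then show ?thesis by (metis mod_mult_self1)
  qed (simp add: add.commute)
  moreover have "- h + w (I + int n) = - w I - 1" for I
    using alternating_add_n[OF w, of I] by simp
  ultimately have "aff_apply (e, e * int n + A, - h, \<lambda>I. - h + w (I + int n))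
      = aff_apply (e, A + int n, - h, \<lambda>I. - w I - 1)"
    by (intro aff_apply_cong) simp_all
  then have "aff_apply (aff_comp P deck) = aff_apply (aff_comp deck P)"
    by (simp add: P deck_def)
  then show ?thesis
    by (simp add: aff_apply_comp assms admissible_deck)
qed

lemma aff_apply_deck: "aff_apply deck (I, J) = ((I + int n) mod (2 * int n), (- J - 1) mod int m)"
  by (simp add: deck_def)

lemma upper_add_n_mod:
  assumes "int n \<le> I" and "I < 2 * int n"
  shows "(I + int n) mod (2 * int n) = I - int n"
proof -
  have "(I + int n) mod (2 * int n) = (I - int n + 2 * int n) mod (2 * int n)"
    by (rule arg_cong[where f = "\<lambda>x. x mod (2 * int n)"]) simp
  also have "\<dots> = I - int n"
    unfolding mod_add_self2 using assms by (intro mod_pos_pos_trivial) auto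
  finally show ?thesis .
qed

lemma cover_proj_deck:
  assumes "x \<in> cover_box"
  shows "cover_proj (aff_apply deck x) = cover_proj x"
proof -
  obtain I J where x: "x = (I, J)" and I: "0 \<le> I" "I < 2 * int n" and J: "0 \<le> J" "J < int m"
    using assms by (cases x) (auto simp: cover_box_def)
  show ?thesis
  proof (cases "I < int n")
    case True
    then have "(I + int n) mod (2 * int n) = I + int n" using I by simp
    then show ?thesis
      using True I J reflect_mod_reflect[of J "int m"] unfolding x aff_apply_deck by simp
  next
    case False
    then have "(I + int n) mod (2 * int n) = I - int n" using I by (simp add: upper_add_n_mod)
    then show ?thesis using False I unfolding x aff_apply_deck by simp
  qed
qed

lemma vertex_lift_in_box:
  assumes "v \<in> vset n m"
  shows "vertex_lift v \<in> cover_box" and "fst (vertex_lift v) < int n"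
  using assms by (auto simp: vset_def vertex_lift_def cover_box_def)

lemma cover_proj_vertex_lift: "v \<in> vset n m \<Longrightarrow> cover_proj (vertex_lift v) = v"
  by (cases v) (auto simp: vset_def vertex_lift_def)

lemma vertex_lift_cover_proj:
  assumes "x \<in> cover_box" and "fst x < int n"
  shows "vertex_lift (cover_proj x) = x"
  using assms by (cases x) (auto simp: cover_box_def vertex_lift_def)

lemma cover_proj_in_vset:
  assumes "x \<in> cover_box"
  shows "cover_proj x \<in> vset n m"
proof -
  obtain I J where x: "x = (I, J)" by (cases x)
  have "0 \<le> (- J - 1) mod int m" "(- J - 1) mod int m < int m" using m_pos by simp_all
  then have "0 \<le> (- J - 1) mod int m" "(- J - 1) mod int m + 1 \<le> int m" by linarith+
  then show ?thesis using assms by (auto simp: x cover_box_def vset_def nat_le_iff le_nat_iff)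
qed

lemma fst_cover_proj:
  assumes "x \<in> cover_box"
  shows "fst (cover_proj x) = nat (fst x mod int n + 1)"
proof -
  obtain I J where x: "x = (I, J)" and I: "0 \<le> I" "I < 2 * int n"
    using assms by (cases x) (auto simp: cover_box_def)
  show ?thesis
  proof (cases "I < int n")
    case False
    have "I mod int n = (I - int n + int n) mod int n" by simp
    also have "\<dots> = I - int n"
      unfolding mod_add_self2 using False I by (intro mod_pos_pos_trivial) auto
    finally show ?thesis using False by (simp add: x)
  qed (simp add: x I)
qed

lemma cover_proj_inj_on_fiber:
  assumes "x \<in> cover_box" "y \<in> cover_box" "fst x = fst y" "cover_proj x = cover_proj y"
  shows "x = y"
proof -
  obtain I J J' where x: "x = (I, J)" and y: "y = (I, J')"
    and J: "0 \<le> J" "J < int m" "0 \<le> J'" "J' < int m"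
    using assms(1-3) by (cases x, cases y) (auto simp: cover_box_def)
  have "J mod int m = J' mod int m"
  proof (cases "I < int n")
    case False
    then have "nat ((- J - 1) mod int m + 1) = nat ((- J' - 1) mod int m + 1)"
      using assms(4) by (simp add: x y)
    moreover have "0 \<le> (- J - 1) mod int m + 1" "0 \<le> (- J' - 1) mod int m + 1"
      using m_pos by (simp_all add: add_nonneg_nonneg)
    ultimately have "(- J - 1) mod int m = (- J' - 1) mod int m"
      by (simp add: eq_nat_nat_iff)
    then show ?thesis by (metis reflect_mod_reflect)
  qed (use assms(4) J in \<open>simp add: x y\<close>)
  then show ?thesis using J by (simp add: x y)
qed

lemma cover_proj_upper:
  assumes "int n \<le> I"
  shows "cover_proj (I, J mod int m) = (nat (I - int n + 1), nat ((- J - 1) mod int m + 1))"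
  using assms mod_diff_left_eq[of "- (J mod int m)" "int m" 1] mod_minus_eq[of J "int m"]
  by (simp add: mod_diff_left_eq[of "- J" "int m" 1])

lemma aff_perm_apply: "v \<in> vset n m \<Longrightarrow> aff_perm P v = cover_proj (aff_apply P (vertex_lift v))"
  by (simp add: aff_perm_def)

lemma aff_perm_cover_proj:
  assumes "admissible P" and "x \<in> cover_box"
  shows "aff_perm P (cover_proj x) = cover_proj (aff_apply P x)"
proof -
  have lower: "aff_perm P (cover_proj y) = cover_proj (aff_apply P y)"
    if "y \<in> cover_box" "fst y < int n" for y
    using that by (simp add: aff_perm_def cover_proj_in_vset vertex_lift_cover_proj)
  show ?thesis
  proof (cases "fst x < int n")
    case True
    then show ?thesis by (rule lower[OF assms(2)])
  next
    case False
    have "fst (aff_apply deck x) < int n"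
      using False assms(2) by (cases x) (auto simp: aff_apply_deck cover_box_def upper_add_n_mod)
    then have "aff_perm P (cover_proj (aff_apply deck x)) = cover_proj (aff_apply P (aff_apply deck x))"
      by (intro lower aff_apply_in_box)
    then show ?thesis
      by (simp add: cover_proj_deck assms aff_apply_deck_commute aff_apply_in_box)
  qed
qed

lemma compose_aff_perm:
  assumes "admissible P"
  shows "compose (vset n m) (aff_perm P) (aff_perm Q) = aff_perm (aff_comp P Q)"
proof
  fix v
  show "compose (vset n m) (aff_perm P) (aff_perm Q) v = aff_perm (aff_comp P Q) v"
  proof (cases "v \<in> vset n m")
    case True
    then have "aff_perm Q v = cover_proj (aff_apply Q (vertex_lift v))"
      by (simp add: aff_perm_def)
    then have "aff_perm P (aff_perm Q v) = cover_proj (aff_apply (aff_comp P Q) (vertex_lift v))"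
      by (simp add: aff_perm_cover_proj[OF assms aff_apply_in_box] aff_apply_comp[OF assms])
    moreover have "aff_perm (aff_comp P Q) v = cover_proj (aff_apply (aff_comp P Q) (vertex_lift v))"
      using True by (simp add: aff_perm_def)
    ultimately show ?thesis using True by (simp add: compose_def)
  qed (simp add: compose_def aff_perm_def)
qed

lemma aff_perm_cong:
  assumes "A mod (2 * int n) = A' mod (2 * int n)" and "\<And>I. w I mod int m = w' I mod int m"
  shows "aff_perm (e, A, h, w) = aff_perm (e, A', h, w')"
  unfolding aff_perm_def aff_apply_cong[OF assms] ..

lemma cover_proj_aff_apply_eq:
  assumes "aff_perm P = aff_perm Q" and "x \<in> cover_box" "fst x < int n"
  shows "cover_proj (aff_apply P x) = cover_proj (aff_apply Q x)"
proof -
  have v: "cover_proj x \<in> vset n m" by (rule cover_proj_in_vset[OF assms(2)])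
  show ?thesis
    using aff_perm_apply[OF v, of P] aff_perm_apply[OF v, of Q] assms(1)
    by (simp add: vertex_lift_cover_proj[OF assms(2,3)])
qed

lemma fst_aff_apply_cong:
  assumes "aff_perm P = aff_perm Q" and "x \<in> cover_box" "fst x < int n"
  shows "fst (aff_apply P x) mod int n = fst (aff_apply Q x) mod int n"
proof -
  have "nat (fst (aff_apply P x) mod int n + 1) = nat (fst (aff_apply Q x) mod int n + 1)"
    using arg_cong[OF cover_proj_aff_apply_eq[OF assms], of fst]
    by (simp only: fst_cover_proj[OF aff_apply_in_box])
  moreover have "0 \<le> fst (aff_apply R x) mod int n + 1" for R using n_pos by simp
  ultimately show ?thesis by (simp add: eq_nat_nat_iff)
qed

lemma aff_apply_eq_of_fst_eq:
  assumes "aff_perm P = aff_perm Q" and "x \<in> cover_box" "fst x < int n"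
    and "fst (aff_apply P x) = fst (aff_apply Q x)"
  shows "aff_apply P x = aff_apply Q x"
  by (rule cover_proj_inj_on_fiber[OF aff_apply_in_box aff_apply_in_box assms(4)
        cover_proj_aff_apply_eq[OF assms(1-3)]])

lemma aff_perm_id: "aff_perm aff_id = (\<lambda>v \<in> vset n m. v)"
proof (unfold aff_perm_def, rule restrict_ext)
  fix v assume "v \<in> vset n m"
  moreover have "aff_apply aff_id (vertex_lift v) = vertex_lift v"
    using vertex_lift_in_box[OF calculation] by (cases "vertex_lift v") (simp add: aff_id_def cover_box_def)
  ultimately show "cover_proj (aff_apply aff_id (vertex_lift v)) = v"
    by (simp add: cover_proj_vertex_lift)
qed

lemma aff_perm_Bij:
  assumes "admissible P"
  shows "aff_perm P \<in> Bij (vset n m)"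
proof -
  have maps: "aff_perm Q ` vset n m \<subseteq> vset n m" for Q
    by (auto simp: aff_perm_def cover_proj_in_vset aff_apply_in_box)
  have cancel: "\<forall>v \<in> vset n m. aff_perm Q (aff_perm R v) = v"
    if "admissible Q" and "aff_comp Q R = aff_id" for Q R
  proof
    fix v assume v: "v \<in> vset n m"
    have "compose (vset n m) (aff_perm Q) (aff_perm R) v = aff_perm aff_id v"
      using compose_aff_perm[OF that(1), of R] that(2) by simp
    then show "aff_perm Q (aff_perm R v) = v" using v by (simp add: compose_def aff_perm_id)
  qed
  have "bij_betw (aff_perm P) (vset n m) (vset n m)"
    by (rule bij_betw_byWitness[OF cancel[OF admissible_aff_inv[OF assms] aff_comp_inv_left[OF assms]]
          cancel[OF assms aff_comp_inv_right[OF assms]] maps maps])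
  then show ?thesis by (simp add: Bij_def aff_perm_def)
qed

abbreviation Sym :: "(nat \<times> nat \<Rightarrow> nat \<times> nat) monoid" where
  "Sym \<equiv> BijGroup (vset n m)"

lemma aff_perm_carrier: "admissible P \<Longrightarrow> aff_perm P \<in> carrier Sym"
  by (simp add: BijGroup_def aff_perm_Bij)

lemma aff_perm_mult:
  "admissible P \<Longrightarrow> admissible Q \<Longrightarrow> aff_perm P \<otimes>\<^bsub>Sym\<^esub> aff_perm Q = aff_perm (aff_comp P Q)"
  by (simp add: BijGroup_def aff_perm_Bij compose_aff_perm)

lemma one_Sym: "\<one>\<^bsub>Sym\<^esub> = aff_perm aff_id"
  by (simp add: BijGroup_def aff_perm_id)

lemma aff_perm_inv: "admissible P \<Longrightarrow> inv\<^bsub>Sym\<^esub> (aff_perm P) = aff_perm (aff_inv P)"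
  by (rule group.inv_equality[OF group_BijGroup])
     (simp_all add: aff_perm_mult admissible_aff_inv aff_comp_inv_left one_Sym aff_perm_carrier)

lemma aff_perm_pow: "admissible P \<Longrightarrow> aff_perm P [^]\<^bsub>Sym\<^esub> k = aff_perm (aff_pow P k)"
  by (induction k) (simp_all add: one_Sym aff_perm_mult admissible_aff_pow)

lemma aff_perm_deck: "aff_perm deck = \<one>\<^bsub>Sym\<^esub>"
proof -
  have "aff_perm deck v = v" if "v \<in> vset n m" for v
    using that vertex_lift_in_box[OF that]
    by (simp add: aff_perm_def cover_proj_deck cover_proj_vertex_lift)
  then show ?thesis by (simp add: BijGroup_def fun_eq_iff aff_perm_def)
qed

lemma aff_perm_deck_comp: "admissible P \<Longrightarrow> aff_perm (aff_comp deck P) = aff_perm P"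
  using aff_perm_mult[OF admissible_deck] aff_perm_deck
    monoid.l_one[OF group.is_monoid[OF group_BijGroup] aff_perm_carrier] by metis

fun aff_reduce :: "aff \<Rightarrow> aff" where
  "aff_reduce (e, A, h, w) = (e, A mod (2 * int n), h, alt_fun h (w 0 mod int m) (w 1 mod int m))"

text \<open>Of the two lifts \<open>P\<close> and \<open>deck \<circ> P\<close> of \<open>aff_perm P\<close>, the normal form keeps the one whose
  translation part lies in \<open>[0, n)\<close>.\<close>

definition normal_form :: "aff \<Rightarrow> aff" where
  "normal_form P = (if fst (snd (aff_reduce P)) < int n then aff_reduce P
     else aff_reduce (aff_comp deck (aff_reduce P)))"

definition normal_forms :: "aff set" where
  "normal_forms = (\<lambda>(e, A, h, a, b). (e, A, h, alt_fun h a b)) `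
     ({1, -1} \<times> {0..<int n} \<times> {1, -1} \<times> {0..<int m} \<times> {0..<int m})"

lemma admissible_aff_reduce: "admissible P \<Longrightarrow> admissible (aff_reduce P)"
  by (cases P rule: prod_cases4) (simp add: alternating_alt_fun)

lemma aff_perm_aff_reduce:
  assumes "admissible P"
  shows "aff_perm (aff_reduce P) = aff_perm P"
proof -
  obtain e A h w where P: "P = (e, A, h, w)" by (cases P rule: prod_cases4)
  have w: "w I = alt_fun h (w 0) (w 1) I" for I
    using fun_cong[OF alternating_eq_alt_fun] assms by (simp add: P)
  have "alt_fun h (w 0 mod int m) (w 1 mod int m) I mod int m = w I mod int m" for I
    unfolding w[of I] by (rule alt_fun_cong) simp_all
  then show ?thesis
    unfolding P aff_reduce.simps by (intro aff_perm_cong) simp_all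
qed

lemma aff_reduce_in_normal_forms:
  assumes "admissible P" and "fst (snd P) mod (2 * int n) < int n"
  shows "aff_reduce P \<in> normal_forms"
proof -
  obtain e A h w where P: "P = (e, A, h, w)" by (cases P rule: prod_cases4)
  have "(e, A mod (2 * int n), h, w 0 mod int m, w 1 mod int m)
      \<in> {1, -1} \<times> {0..<int n} \<times> {1, -1} \<times> {0..<int m} \<times> {0..<int m}"
    using assms n_pos m_pos by (simp add: P)
  then show ?thesis unfolding normal_forms_def P aff_reduce.simps by (rule rev_image_eqI) simp
qed

lemma normal_form_in_normal_forms:
  assumes "admissible P"
  shows "normal_form P \<in> normal_forms"
proof (cases "fst (snd (aff_reduce P)) < int n")
  case True
  moreover have "fst (snd (aff_reduce P)) = fst (snd P) mod (2 * int n)"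
    by (cases P rule: prod_cases4) simp
  ultimately show ?thesis using assms by (simp add: normal_form_def aff_reduce_in_normal_forms)
next
  case False
  define Q where "Q = aff_reduce P"
  have "fst (snd (aff_comp deck Q)) = fst (snd Q) + int n"
    by (cases Q rule: prod_cases4) (simp add: deck_def)
  moreover have "int n \<le> fst (snd Q)" "fst (snd Q) < 2 * int n"
    using False n_pos by (cases P rule: prod_cases4, simp add: Q_def)+
  ultimately have "fst (snd (aff_comp deck Q)) mod (2 * int n) < int n"
    by (simp add: upper_add_n_mod)
  then show ?thesis
    using False assms by (simp add: normal_form_def flip: Q_def)
      (intro aff_reduce_in_normal_forms admissible_aff_comp admissible_deck admissible_aff_reduce,
       simp_all add: Q_def admissible_aff_reduce)
qed

lemma aff_perm_normal_form:
  assumes "admissible P"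
  shows "aff_perm (normal_form P) = aff_perm P"
  using assms by (simp add: normal_form_def aff_perm_aff_reduce admissible_aff_reduce
      aff_perm_deck_comp admissible_aff_comp admissible_deck)

lemma normal_forms_admissible: "P \<in> normal_forms \<Longrightarrow> admissible P"
  by (auto simp: normal_forms_def alternating_alt_fun)

lemma fst_normal_form: "fst (normal_form P) = fst P"
  by (cases P rule: prod_cases4) (simp add: normal_form_def deck_def)

lemma normal_form_aff_id: "normal_form aff_id = (1, 0, 1, alt_fun 1 0 0)"
  using n_pos by (simp add: normal_form_def aff_id_def)

lemma card_normal_forms: "card normal_forms = 4 * m^2 * n"
proof -
  have "inj_on (\<lambda>(e, A, h, a, b). (e, A, h, alt_fun h a b)) X"
    for X :: "(int \<times> int \<times> int \<times> int \<times> int) set"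
  proof (rule inj_onI, clarsimp)
    fix h a b a' b' assume "alt_fun h a b = alt_fun h a' b'"
    then show "a = a' \<and> b = b'" by (metis alt_fun_0_1)
  qed
  then show ?thesis unfolding normal_forms_def
    by (simp add: card_image card_cartesian_product power2_eq_square) (simp add: algebra_simps)
qed

lemma sigma1_eq: "sigma1 n m = aff_perm (translation 1)"
proof
  fix v
  show "sigma1 n m v = aff_perm (translation 1) v"
  proof (cases "v \<in> vset n m")
    case True
    obtain i j where v: "v = (i, j)" and i: "1 \<le> i" "i \<le> n" and j: "1 \<le> j" "j \<le> m"
      using True by (cases v) (auto simp: vset_def)
    have lift: "aff_perm (translation 1) v = cover_proj (int i, (int j - 1) mod int m)"
      using True i by (simp add: aff_perm_apply v vertex_lift_def translation_def)
    show ?thesis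
    proof (cases "i = n")
      case False
      then show ?thesis using True i j lift by (simp add: sigma1_def aut_def v rperm_def)
    next
      case True
      then have "aff_perm (translation 1) v = (1, nat ((- int j) mod int m + 1))"
        unfolding lift using cover_proj_upper[of "int i" "int j - 1"] by simp
      then show ?thesis
        using True \<open>v \<in> vset n m\<close> j by (simp add: sigma1_def aut_def v rperm_def pmul_def cinv_tperm)
    qed
  qed (simp add: sigma1_def aut_def aff_perm_def)
qed

lemma aff_perm_sigma2_lift_first:
  assumes "1 \<le> j" and "j \<le> m"
  shows "aff_perm sigma2_lift (1, j) = (1, tperm m j)"
proof -
  have "(1, j) \<in> vset n m" using assms n_pos by (simp add: vset_def)
  then show ?thesis
    using n_pos by (simp add: aff_perm_apply vertex_lift_def sigma2_lift_def tperm_eq[OF assms])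
qed

lemma aff_perm_sigma2_lift_other:
  assumes "2 \<le> i" "i \<le> n" and "1 \<le> j" "j \<le> m"
  shows "aff_perm sigma2_lift (i, j)
    = (n + 2 - i, nat ((int j - 2 - alt_fun (-1) 0 0 (int i - 1)) mod int m + 1))"
proof -
  define W where "W = alt_fun (-1) 0 0 (int i - 1)"
  have "(i, j) \<in> vset n m" using assms by (simp add: vset_def)
  moreover have "aff_apply sigma2_lift (vertex_lift (i, j))
      = ((1 - int i) mod (2 * int n), (1 - int j + W) mod int m)"
    by (simp add: vertex_lift_def sigma2_lift_def W_def)
  ultimately have lift: "aff_perm sigma2_lift (i, j)
      = cover_proj ((1 - int i) mod (2 * int n), (1 - int j + W) mod int m)"
    by (simp add: aff_perm_apply)
  have "(1 - int i) mod (2 * int n) = (1 - int i + 2 * int n) mod (2 * int n)" by simp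
  also have "\<dots> = 1 - int i + 2 * int n" using assms by (intro mod_pos_pos_trivial) auto
  also have "\<dots> = int (n + 2 - i) + int n - 1" using assms by (simp add: of_nat_diff)
  finally have I: "(1 - int i) mod (2 * int n) = int (n + 2 - i) + int n - 1" .
  have J: "- (1 - int j + W) - 1 = int j - 2 - W" by simp
  have "aff_perm sigma2_lift (i, j) = (n + 2 - i, nat ((- (1 - int j + W) - 1) mod int m + 1))"
    unfolding lift I using assms by (subst cover_proj_upper) simp_all
  then have "aff_perm sigma2_lift (i, j) = (n + 2 - i, nat ((int j - 2 - W) mod int m + 1))"
    unfolding J .
  then show ?thesis unfolding W_def .
qed

lemma sigma2_eq: "sigma2 n m = aff_perm sigma2_lift"
proof
  fix v
  show "sigma2 n m v = aff_perm sigma2_lift v"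
  proof (cases "v \<in> vset n m")
    case True
    then obtain i j where v: "v = (i, j)" and i: "1 \<le> i" "i \<le> n" and j: "1 \<le> j" "j \<le> m"
      by (cases v) (auto simp: vset_def)
    show ?thesis
    proof (cases "i = 1")
      case True
      then show ?thesis
        using \<open>v \<in> vset n m\<close> aff_perm_sigma2_lift_first[OF j]
        by (simp add: sigma2_def aut_def v zperm_def)
    next
      case False
      then show ?thesis
        using \<open>v \<in> vset n m\<close> aff_perm_sigma2_lift_other[of i j] i j beta_eq[OF i(1) j(1) m_pos]
        by (simp add: sigma2_def aut_def v zperm_def)
    qed
  qed (simp add: sigma2_def aut_def aff_perm_def)
qed

end

locale faithful_double_cover = double_cover +
  assumes n_gt_2: "2 < n" and m_ge_3: "3 \<le> m"
begin

lemma aff_perm_inj_on: "inj_on aff_perm normal_forms"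
proof (rule inj_onI)
  fix P Q assume P: "P \<in> normal_forms" and Q: "Q \<in> normal_forms" and eq: "aff_perm P = aff_perm Q"
  from P obtain e A h a b where P: "P = (e, A, h, alt_fun h a b)" and
    e: "e = 1 \<or> e = -1" and h: "h = 1 \<or> h = -1" and
    A: "0 \<le> A" "A < int n" and ab: "0 \<le> a" "a < int m" "0 \<le> b" "b < int m"
    by (auto simp: normal_forms_def)
  from Q obtain e' A' h' a' b' where Q: "Q = (e', A', h', alt_fun h' a' b')" and
    e': "e' = 1 \<or> e' = -1" and h': "h' = 1 \<or> h' = -1" and
    A': "0 \<le> A'" "A' < int n" and ab': "0 \<le> a'" "a' < int m" "0 \<le> b'" "b' < int m"
    by (auto simp: normal_forms_def)
  txt \<open>A normal form is already determined by the images of the lifts \<open>(0, 0)\<close>, \<open>(0, 1)\<close>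
    and \<open>(1, 0)\<close>.\<close>
  have box: "(0, 0) \<in> cover_box" "(0, 1) \<in> cover_box" "(1, 0) \<in> cover_box"
    using n_gt_2 m_ge_3 by (auto simp: cover_box_def)
  note mod_eq = fst_aff_apply_cong[OF eq] and eq_of_fst = aff_apply_eq_of_fst_eq[OF eq]
  have "A mod int n = A' mod int n" using mod_eq[OF box(1)] A A' ab ab' n_gt_2 by (simp add: P Q)
  then have AA: "A = A'" using A A' by simp
  then have aa: "a = a'" using eq_of_fst[OF box(1)] A A' ab ab' n_gt_2 by (simp add: P Q)
  have "(h + a) mod int m = (h' + a) mod int m"
    using eq_of_fst[OF box(2)] A' n_gt_2 by (simp add: P Q AA aa)
  then have "h mod int m = h' mod int m" by (simp add: mod_eq_dvd_iff)
  then have hh: "h = h'" by (rule sign_eq_of_cong[OF h h']) (use m_ge_3 in simp)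
  have "(e + A) mod (2 * int n) mod int n = (e' + A) mod (2 * int n) mod int n"
    using mod_eq[OF box(3)] ab ab' n_gt_2 by (simp add: P Q AA add.commute)
  then have "(e + A) mod int n = (e' + A) mod int n" by (simp add: mod_mod_cancel)
  then have "e mod int n = e' mod int n" by (simp add: mod_eq_dvd_iff)
  then have ee: "e = e'" by (rule sign_eq_of_cong[OF e e']) (use n_gt_2 in simp)
  have "b = b'" using eq_of_fst[OF box(3)] ab ab' n_gt_2 by (simp add: P Q AA ee add.commute)
  then show "P = Q" by (simp add: P Q AA aa hh ee)
qed

lemma aff_perm_eq_iff:
  assumes "admissible P" and "admissible Q"
  shows "aff_perm P = aff_perm Q \<longleftrightarrow> normal_form P = normal_form Q"
proof
  assume "aff_perm P = aff_perm Q"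
  then have "aff_perm (normal_form P) = aff_perm (normal_form Q)"
    by (simp add: aff_perm_normal_form assms)
  then show "normal_form P = normal_form Q"
    by (rule inj_onD[OF aff_perm_inj_on]) (simp_all add: normal_form_in_normal_forms assms)
next
  assume "normal_form P = normal_form Q"
  then show "aff_perm P = aff_perm Q" by (metis aff_perm_normal_form assms)
qed

lemma aff_perm_eq_one_iff:
  "admissible P \<Longrightarrow> aff_perm P = \<one>\<^bsub>Sym\<^esub> \<longleftrightarrow> normal_form P = (1, 0, 1, alt_fun 1 0 0)"
  using aff_perm_eq_iff[OF _ admissible_aff_id] by (simp add: one_Sym normal_form_aff_id)

lemma reflection_neq_one: "admissible P \<Longrightarrow> fst P = -1 \<Longrightarrow> aff_perm P \<noteq> \<one>\<^bsub>Sym\<^esub>"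
  using fst_normal_form[of P] by (auto simp: aff_perm_eq_one_iff)

lemma translation_eq_one_iff: "aff_perm (translation A) = \<one>\<^bsub>Sym\<^esub> \<longleftrightarrow> A mod (2 * int n) = 0"
  unfolding aff_perm_eq_one_iff[OF admissible_translation]
  using n_pos by (simp add: normal_form_def translation_def deck_def)

lemma shear_eq_one_iff: "aff_perm (shear 0 b) = \<one>\<^bsub>Sym\<^esub> \<longleftrightarrow> b mod int m = 0"
proof -
  have "alt_fun 1 0 (b mod int m) = alt_fun 1 0 0 \<longleftrightarrow> b mod int m = 0"
    by (metis alt_fun_0_1(2))
  then show ?thesis
    unfolding aff_perm_eq_one_iff[OF admissible_shear]
    using n_pos by (simp add: normal_form_def shear_def)
qed

end

locale odd_double_cover = double_cover +
  assumes m_odd: "odd m"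
begin

abbreviation G :: "(nat \<times> nat \<Rightarrow> nat \<times> nat) set" where
  "G \<equiv> generate Sym {sigma1 n m, sigma2 n m}"

lemma pow_in_G: "x \<in> G \<Longrightarrow> x [^]\<^bsub>Sym\<^esub> (k::nat) \<in> G"
  by (induction k) (simp_all add: generate.one generate.eng)

lemma translation_in_G: "aff_perm (translation A) \<in> G"
proof -
  have "0 \<le> A mod (2 * int n)" using n_pos by simp
  then obtain k :: nat where k: "A mod (2 * int n) = int k" using nonneg_int_cases by metis
  have "aff_perm (translation A) = aff_perm (translation (int k))"
    unfolding translation_def by (rule aff_perm_cong) (simp_all add: k[symmetric])
  also have "\<dots> = sigma1 n m [^]\<^bsub>Sym\<^esub> k"
    by (simp add: sigma1_eq aff_perm_pow admissible_translation aff_pow_translation)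
  finally show ?thesis using pow_in_G[of "sigma1 n m" k] by (simp add: generate.incl)
qed

lemma shear_0_in_G: "aff_perm (shear 0 y) \<in> G"
proof -
  have "0 \<le> ((int m - 1) div 2 * y) mod int m" using m_pos by simp
  then obtain k :: nat where k: "((int m - 1) div 2 * y) mod int m = int k" using nonneg_int_cases by metis
  have half: "2 * ((int m - 1) div 2) = int m - 1" using m_odd by presburger
  have "(- 2 * int k) mod int m = (- 2 * ((int m - 1) div 2 * y)) mod int m"
    unfolding k[symmetric] by (metis mod_mult_right_eq)
  also have "- 2 * ((int m - 1) div 2 * y) = - (2 * ((int m - 1) div 2)) * y"
    by (simp add: algebra_simps)
  also have "\<dots> = y + (- y) * int m" unfolding half by (simp add: algebra_simps)
  also have "(y + (- y) * int m) mod int m = y mod int m" by (rule mod_mult_self1)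
  finally have ky: "(- 2 * int k) mod int m = y mod int m" .
  have "alt_fun 1 0 (- 2 * int k) I mod int m = alt_fun 1 0 y I mod int m" for I
    by (rule alt_fun_cong[OF refl ky])
  then have "sigma2 n m [^]\<^bsub>Sym\<^esub> (2 * k) = aff_perm (shear 0 y)"
    unfolding sigma2_eq aff_perm_pow[OF admissible_sigma2_lift] aff_pow_sigma2_lift_even shear_def
    by (rule aff_perm_cong[OF refl])
  then show ?thesis using pow_in_G[of "sigma2 n m" "2 * k"] by (simp add: generate.incl)
qed

lemma shear_in_G: "aff_perm (shear a b) \<in> G"
proof -
  have "alt_fun 1 0 a (I + 1) = alt_fun 1 a 0 I" for I by (simp add: alt_fun_shift)
  then have "aff_comp (aff_comp (translation (-1)) (shear 0 a)) (translation 1) = shear a 0"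
    using conj_translation[of 1 "alt_fun 1 0 a"] by (simp add: shear_def)
  then have "aff_perm (translation (-1)) \<otimes>\<^bsub>Sym\<^esub> aff_perm (shear 0 a) \<otimes>\<^bsub>Sym\<^esub> aff_perm (translation 1)
      = aff_perm (shear a 0)"
    by (simp add: aff_perm_mult admissible_translation admissible_shear admissible_aff_comp)
  then have "aff_perm (shear a 0) \<in> G"
    by (metis generate.eng translation_in_G shear_0_in_G)
  moreover have "aff_perm (shear a b) = aff_perm (shear a 0) \<otimes>\<^bsub>Sym\<^esub> aff_perm (shear 0 b)"
    by (simp add: aff_perm_mult admissible_shear aff_comp_shear)
  ultimately show ?thesis by (simp add: generate.eng shear_0_in_G)
qed

lemma flip_in_G: "aff_perm (1, 0, -1, \<lambda>_. -1) \<in> G"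
proof -
  have "admissible (1, 0, -1, \<lambda>_. -1)" by (simp add: alternating_def)
  then have "aff_perm (1, 0, -1, \<lambda>_. -1) = aff_perm (aff_comp deck (1, 0, -1, \<lambda>_. -1))"
    by (simp add: aff_perm_deck_comp)
  also have "aff_comp deck (1, 0, -1, \<lambda>_. -1) = translation (int n)"
    by (simp add: deck_def translation_def)
  finally show ?thesis using translation_in_G by simp
qed

lemma kernel_in_G:
  assumes "admissible (1, 0, h, w)"
  shows "aff_perm (1, 0, h, w) \<in> G"
proof -
  have h: "h = 1 \<or> h = -1" using assms by simp
  obtain a b where w: "w = alt_fun h a b"
    using alternating_eq_alt_fun assms by (metis admissible.simps)
  from h show ?thesis
  proof
    assume "h = 1"
    then show ?thesis using shear_in_G[of a b] by (simp add: w shear_def)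
  next
    assume h: "h = -1"
    have "- 1 + alt_fun 1 (a + 1) (b + 1) I = alt_fun (-1) a b I" for I
      by (simp add: alt_fun_def)
    then have "aff_comp (shear (a + 1) (b + 1)) (1, 0, -1, \<lambda>_. -1) = (1, 0, h, w)"
      by (simp add: w h shear_def)
    then have "aff_perm (shear (a + 1) (b + 1)) \<otimes>\<^bsub>Sym\<^esub> aff_perm (1, 0, -1, \<lambda>_. -1)
        = aff_perm (1, 0, h, w)"
      by (simp add: aff_perm_mult admissible_shear alternating_def)
    then show ?thesis by (metis generate.eng shear_in_G flip_in_G)
  qed
qed

lemma admissible_in_G:
  assumes "admissible P"
  shows "aff_perm P \<in> G"
proof -
  obtain e A h w where P: "P = (e, A, h, w)" by (cases P rule: prod_cases4)
  have P0: "admissible (e, 0, h, w)" using assms by (simp add: P)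
  have "aff_perm (e, 0, h, w) \<in> G"
  proof (cases "e = 1")
    case True
    then show ?thesis using kernel_in_G P0 by simp
  next
    case False
    define K where "K = aff_comp (e, 0, h, w) (aff_inv sigma2_lift)"
    have K: "admissible K"
      unfolding K_def by (intro admissible_aff_comp admissible_aff_inv P0 admissible_sigma2_lift)
    obtain hK wK where K1: "K = (1, 0, hK, wK)"
      using False P0 by (simp add: K_def sigma2_lift_def)
    have "aff_comp K sigma2_lift = (e, 0, h, w)"
      by (simp add: K_def aff_comp_assoc aff_comp_inv_left admissible_sigma2_lift)
    then have "aff_perm K \<otimes>\<^bsub>Sym\<^esub> sigma2 n m = aff_perm (e, 0, h, w)"
      by (simp add: sigma2_eq aff_perm_mult K admissible_sigma2_lift)
    then show ?thesis using kernel_in_G K K1 by (metis generate.eng generate.incl insertCI)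
  qed
  moreover have "aff_comp (translation A) (e, 0, h, w) = P" by (simp add: P translation_def)
  ultimately show ?thesis
    using translation_in_G generate.eng aff_perm_mult[OF admissible_translation P0] by metis
qed

lemma generate_eq: "G = aff_perm ` normal_forms"
proof
  show "G \<subseteq> aff_perm ` normal_forms"
  proof
    fix x assume "x \<in> G"
    then have "\<exists>P. admissible P \<and> x = aff_perm P"
    proof (induction rule: generate.induct)
      case one
      then show ?case using admissible_aff_id one_Sym by blast
    next
      case (incl g)
      then have "g = aff_perm (translation 1) \<or> g = aff_perm sigma2_lift"
        by (simp add: sigma1_eq sigma2_eq)
      then show ?case using admissible_translation admissible_sigma2_lift by blast
    next
      case (inv g)
      then have "g = aff_perm (translation 1) \<or> g = aff_perm sigma2_lift"
        by (simp add: sigma1_eq sigma2_eq)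
      then show ?case
        using admissible_translation admissible_sigma2_lift aff_perm_inv admissible_aff_inv by metis
    next
      case (eng g1 g2)
      then show ?case using aff_perm_mult admissible_aff_comp by blast
    qed
    then show "x \<in> aff_perm ` normal_forms"
      using aff_perm_normal_form normal_form_in_normal_forms by (metis image_eqI)
  qed
  show "aff_perm ` normal_forms \<subseteq> G"
    using admissible_in_G normal_forms_admissible by blast
qed

end

locale sigma_double_cover = faithful_double_cover + odd_double_cover
begin

lemma card_generate: "card G = 4 * m^2 * n"
  using card_image[OF aff_perm_inj_on] card_normal_forms by (simp add: generate_eq)

lemma ord_sigma1: "group.ord Sym (sigma1 n m) = 2 * n"
proof -
  have "sigma1 n m [^]\<^bsub>Sym\<^esub> k = \<one>\<^bsub>Sym\<^esub> \<longleftrightarrow> 2 * n dvd k" for k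
  proof -
    have "sigma1 n m [^]\<^bsub>Sym\<^esub> k = aff_perm (translation (int k))"
      by (simp add: sigma1_eq aff_perm_pow admissible_translation aff_pow_translation)
    moreover have "int k mod (2 * int n) = 0 \<longleftrightarrow> 2 * n dvd k"
      by (metis dvd_eq_mod_eq_0 of_nat_dvd_iff of_nat_mult of_nat_numeral)
    ultimately show ?thesis by (simp add: translation_eq_one_iff)
  qed
  then show ?thesis
    by (simp add: group.ord_unique[OF group_BijGroup] sigma1_eq aff_perm_carrier admissible_translation)
qed

lemma ord_sigma2: "group.ord Sym (sigma2 n m) = 2 * m"
proof -
  have "sigma2 n m [^]\<^bsub>Sym\<^esub> k = \<one>\<^bsub>Sym\<^esub> \<longleftrightarrow> 2 * m dvd k" for k
  proof (cases "even k")
    case True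
    then obtain q where k: "k = 2 * q" by blast
    have "sigma2 n m [^]\<^bsub>Sym\<^esub> k = aff_perm (shear 0 (- 2 * int q))"
      by (simp add: k sigma2_eq aff_perm_pow admissible_sigma2_lift aff_pow_sigma2_lift_even)
    moreover have "(- 2 * int q) mod int m = 0 \<longleftrightarrow> m dvd q"
    proof -
      have "coprime m 2" using m_odd by simp
      then have "m dvd 2 * q \<longleftrightarrow> m dvd q" by (simp add: coprime_dvd_mult_right_iff)
      moreover have "(- 2 * int q) mod int m = 0 \<longleftrightarrow> m dvd 2 * q"
        by (metis dvd_eq_mod_eq_0 dvd_minus_iff mult_minus_left of_nat_dvd_iff of_nat_mult of_nat_numeral)
      ultimately show ?thesis by simp
    qed
    ultimately show ?thesis by (simp add: shear_eq_one_iff k)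
  next
    case False
    then obtain q where k: "k = Suc (2 * q)" by (metis oddE Suc_eq_plus1)
    have "sigma2 n m [^]\<^bsub>Sym\<^esub> k = aff_perm (aff_comp (shear 0 (- 2 * int q)) sigma2_lift)"
      by (simp add: k sigma2_eq aff_perm_pow admissible_sigma2_lift aff_pow_sigma2_lift_even
          aff_perm_mult admissible_shear)
    moreover have "aff_perm (aff_comp (shear 0 (- 2 * int q)) sigma2_lift) \<noteq> \<one>\<^bsub>Sym\<^esub>"
      by (rule reflection_neq_one[OF admissible_aff_comp[OF admissible_shear admissible_sigma2_lift]])
        (simp add: shear_def sigma2_lift_def)
    moreover have "\<not> 2 * m dvd k" using False dvd_mult_left[of 2 m k] by blast
    ultimately show ?thesis by simp
  qed
  then show ?thesis
    by (simp add: group.ord_unique[OF group_BijGroup] sigma2_eq aff_perm_carrier admissible_sigma2_lift)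
qed

lemma ord_sigma2_sigma1: "group.ord Sym (sigma2 n m \<otimes>\<^bsub>Sym\<^esub> sigma1 n m) = 2"
proof -
  define X where "X = aff_comp sigma2_lift (translation 1)"
  have X: "admissible X" unfolding X_def by (intro admissible_aff_comp admissible_sigma2_lift admissible_translation)
  have prod: "sigma2 n m \<otimes>\<^bsub>Sym\<^esub> sigma1 n m = aff_perm X"
    by (simp add: X_def sigma1_eq sigma2_eq aff_perm_mult admissible_sigma2_lift admissible_translation)
  have "aff_perm X \<noteq> \<one>\<^bsub>Sym\<^esub>"
    by (rule reflection_neq_one[OF X]) (simp add: X_def sigma2_lift_def translation_def)
  then have "aff_perm X [^]\<^bsub>Sym\<^esub> k = \<one>\<^bsub>Sym\<^esub> \<longleftrightarrow> 2 dvd k" for k :: nat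
    using aff_pow_involution[OF sigma2_sigma1_lift_involution[folded X_def], of k]
    by (simp add: aff_perm_pow[OF X] one_Sym)
  then show ?thesis
    by (simp add: prod group.ord_unique[OF group_BijGroup] aff_perm_carrier[OF X])
qed

end

theorem lemma5p4:
  fixes m s n :: nat
  assumes "m \<ge> 3" and "odd m"
    and "s > 0" and "even s" and "\<not> 4 dvd s"
    and "n = s * m"
  shows "group.ord (BijGroup (vset n m)) (sigma1 n m) = 2 * n
       \<and> group.ord (BijGroup (vset n m)) (sigma2 n m) = 2 * m
       \<and> group.ord (BijGroup (vset n m))
            (sigma2 n m \<otimes>\<^bsub>BijGroup (vset n m)\<^esub> sigma1 n m) = 2
       \<and> card (generate (BijGroup (vset n m)) {sigma1 n m, sigma2 n m}) = 4 * m^2 * n"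
proof -
  have "s = 4 * (s div 4) + 2" using assms(4,5) by presburger
  then obtain a where a: "s = 4 * a + 2" by blast
  obtain b where b: "m = 2 * b + 1" using assms(2) by (metis oddE)
  have "n = 4 * (2 * a * b + a + b) + 2" unfolding assms(6) a b by (simp add: algebra_simps)
  then have "n mod 4 = 2" by presburger
  moreover have "2 < n" using assms(1) unfolding assms(6) a by simp
  ultimately interpret sigma_double_cover n m
    using assms(1,2) by unfold_locales simp_all
  show ?thesis using ord_sigma1 ord_sigma2 ord_sigma2_sigma1 card_generate by simp
qed

end
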